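(* Let $p>1$, $N\ge m$, and let $S$ be the set of pairs $(A,y)\in\mathbb R^{m\times N}\times\mathbb R^m$ such that every $m\times m$ submatrix of $A$ is invertible and $y\neq0$. For every $(A,y)\in S$: (i) the unique optimal solution $x^*$ of $\min\|x\|_p$ s.t. $Ax=y$ satisfies $|\mathrm{supp}(x^* )|\ge N-m+1$; (ii) if $0<\varepsilon<\|y\|_2$, the unique optimal solution $x^*$ of $\min\|x\|_p$ s.t. $\|Ax-y\|_2\le\varepsilon$ satisfies $|\mathrm{supp}(x^* )|\ge N-m+1$; (iii) for any $\lambda>0$, the unique optimal solution $x^*$ of $\min_x \frac12\|Ax-y\|_2^2+\lambda\|x\|_p^p$ satisfies $|\mathrm{supp}(x^* )|\ge N-m+1$; (iv) for any $r>0$, $\lambda_1>0$, $\lambda_2\ge0$, every nonzero optimal solution $x^*$ of $\min_x \frac12\|Ax-y\|_2^2+\lambda_1\|x\|_p^r+\lambda_2\|x\|_2^2$ satisfies $|\mathrm{supp}(x^* )|\ge N-m+1$.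
   Context: $\|x\|_p:=(\sum_i|x_i|^p)^{1/p}$; $\mathrm{supp}(x)=\{i: x_i\neq0\}$ and $|\cdot|$ denotes cardinality. *)

theory Defs
  imports Complex_Main "Jordan_Normal_Form.DL_Submatrix"
begin

definition pnorm :: "real \<Rightarrow> real vec \<Rightarrow> real" where
  "pnorm p x = (\<Sum>i<dim_vec x. \<bar>x $ i\<bar> powr p) powr (1 / p)"

definition norm2 :: "real vec \<Rightarrow> real" where
  "norm2 x = sqrt (\<Sum>i<dim_vec x. (x $ i)\<^sup>2)"

definition supp :: "real vec \<Rightarrow> nat set" where
  "supp x = {i. i < dim_vec x \<and> x $ i \<noteq> 0}"

definition all_square_submatrices_invertible :: "real mat \<Rightarrow> bool" where
  "all_square_submatrices_invertible A \<longleftrightarrow>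
     (\<forall>J. J \<subseteq> {..<dim_col A} \<and> card J = dim_row A \<longrightarrow>
          invertible_mat (submatrix A UNIV J))"

end

theory Submission imports Defs begin

text \<open>
  Suppose x \<noteq> 0 has at least m zero coordinates, forming a set J, and x k \<noteq> 0. Since the columns J
  of A are invertible, A has a kernel vector d with d k = 1 and support in J \<union> {k}. Moving x a
  small step s along -sgn (x k) d keeps A x fixed, decreases |x k| by s, and changes the
  coordinates in J, where x vanishes, only by O(s). Hence for every q > 1 the sum of the
  q-th powers |x i|^q drops by about q |x k|^(q-1) s and gains only O(s^q), so it strictly
  decreases. Every objective in the theorem is monotone in these sums on the fibre of A x, so
  no optimal solution can be that sparse; for the penalised problem the zero vector is ruled
  out by comparing it with small multiples of a solution of A w = y.
\<close>

definition sum_abs_powr :: "real \<Rightarrow> real vec \<Rightarrow> real" where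
  "sum_abs_powr q x = (\<Sum>i<dim_vec x. \<bar>x $ i\<bar> powr q)"

lemma sum_abs_powr_nonneg: "sum_abs_powr q x \<ge> 0"
  unfolding sum_abs_powr_def by (auto intro!: sum_nonneg)

lemma pnorm_eq_sum_abs_powr: "pnorm p x = sum_abs_powr p x powr (1 / p)"
  unfolding pnorm_def sum_abs_powr_def ..

lemma pnorm_powr_self: "p > 0 \<Longrightarrow> pnorm p x powr p = sum_abs_powr p x"
  unfolding pnorm_eq_sum_abs_powr using sum_abs_powr_nonneg[of p x] by (simp add: powr_powr)

lemma pnorm_less_pnorm:
  "p > 0 \<Longrightarrow> sum_abs_powr p z < sum_abs_powr p x \<Longrightarrow> pnorm p z < pnorm p x"
  unfolding pnorm_eq_sum_abs_powr by (rule powr_less_mono2) (auto simp: sum_abs_powr_nonneg)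

lemma pnorm_nonneg: "pnorm p x \<ge> 0"
  unfolding pnorm_eq_sum_abs_powr by simp

lemma norm2_power2: "(norm2 v)\<^sup>2 = sum_abs_powr 2 v"
proof -
  have "\<bar>t\<bar> powr 2 = t\<^sup>2" for t :: real
    by (cases "t = 0") (auto simp: powr_numeral)
  then show ?thesis
    unfolding norm2_def sum_abs_powr_def by (simp add: sum_nonneg)
qed

lemma eventually_powr_diff_add_powr_less:
  fixes a q r D :: real
  assumes a: "a > 0" and q: "q > 0" and r: "r > 1" and D: "D \<ge> 0"
  shows "eventually (\<lambda>s. (a - s) powr q + D * s powr r < a powr q) (at_right 0)"
proof -
  have "((\<lambda>s. (a - s) powr q) has_real_derivative - q * a powr (q - 1)) (at 0)"
    using DERIV_fun_powr[of "\<lambda>s. a - s" "-1" 0 q] a by (auto intro!: derivative_eq_intros)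
  then have quotient_at: "((\<lambda>s. ((a - s) powr q - a powr q) / s) \<longlongrightarrow> - q * a powr (q - 1)) (at 0)"
    by (auto dest: DERIV_D)
  have quotient: "((\<lambda>s. ((a - s) powr q - a powr q) / s) \<longlongrightarrow> - q * a powr (q - 1)) (at_right 0)"
    by (rule tendsto_mono[OF at_le quotient_at]) simp
  have "((\<lambda>s. D * s powr (r - 1)) \<longlongrightarrow> D * 0 powr (r - 1)) (at_right 0)"
    using r by (intro tendsto_intros) (auto simp: eventually_at_right_field intro!: exI[of _ 1])
  then have "((\<lambda>s. ((a - s) powr q - a powr q) / s + D * s powr (r - 1))
      \<longlongrightarrow> - q * a powr (q - 1)) (at_right 0)"
    using tendsto_add[OF quotient] r by fastforce
  moreover have "- q * a powr (q - 1) < 0"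
    using a q by simp
  ultimately have "eventually (\<lambda>s. ((a - s) powr q - a powr q) / s + D * s powr (r - 1) < 0) (at_right 0)"
    by (rule order_tendstoD(2))
  then show ?thesis
    using eventually_at_right_less[of 0]
  proof eventually_elim
    case (elim s)
    have "(((a - s) powr q - a powr q) / s + D * s powr (r - 1)) * s
        = (a - s) powr q - a powr q + D * s powr r"
      using elim(2) by (simp add: field_simps powr_diff)
    moreover have "(((a - s) powr q - a powr q) / s + D * s powr (r - 1)) * s < 0"
      using elim by (simp add: mult_neg_pos)
    ultimately show ?case
      by simp
  qed
qed

lemma mult_mat_vec_nth_sum:
  assumes "A \<in> carrier_mat m n" "v \<in> carrier_vec n" "r < m"
  shows "(A *\<^sub>v v) $ r = (\<Sum>i<n. A $$ (r, i) * v $ i)"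
  using assms by (auto simp: index_mult_mat_vec scalar_prod_def atLeast0LessThan)

lemma exists_solution_supported_on:
  fixes A :: "'a :: field mat"
  assumes A: "A \<in> carrier_mat m N" and J: "J \<subseteq> {..<N}" "card J = m"
    and inv: "invertible_mat (submatrix A UNIV J)" and c: "c \<in> carrier_vec m"
  shows "\<exists>w \<in> carrier_vec N. A *\<^sub>v w = c \<and> (\<forall>i<N. i \<notin> J \<longrightarrow> w $ i = 0)"
proof -
  define B where "B = submatrix A UNIV J"
  have cols: "{j. j < N \<and> j \<in> J} = J" and rows: "{i. i < m \<and> i \<in> (UNIV::nat set)} = {..<m}"
    using J by auto
  have B: "B \<in> carrier_mat m m"
    using A J unfolding B_def by (auto simp: dim_submatrix cols rows)
  obtain Bi where BBi: "B * Bi = 1\<^sub>m m" and BiB: "Bi * B = 1\<^sub>m (dim_row Bi)"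
    using inv B unfolding B_def[symmetric] invertible_mat_def inverts_mat_def by auto
  have "dim_col Bi = m"
    using arg_cong[OF BBi, of dim_col] by simp
  moreover have "dim_row Bi = m"
    using arg_cong[OF BiB, of dim_col] B by simp
  ultimately have Bi: "Bi \<in> carrier_mat m m" by auto
  define u where "u = Bi *\<^sub>v c"
  have u: "u \<in> carrier_vec m"
    using Bi c unfolding u_def by auto
  have Bu: "B *\<^sub>v u = c"
    unfolding u_def using assoc_mult_mat_vec[OF B Bi c, symmetric] BBi c by simp
  have pick_J: "l < m \<Longrightarrow> pick J l \<in> J" for l
    using pick_in_set[of l J] J by auto
  \<comment> \<open>column l of B is column pick J l of A\<close>
  define w where "w = vec N (\<lambda>i. \<Sum>l<m. if i = pick J l then u $ l else 0)"
  have w: "w \<in> carrier_vec N"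
    unfolding w_def by auto
  have "A *\<^sub>v w = c"
  proof (rule eq_vecI)
    fix r assume "r < dim_vec c"
    then have r: "r < m" using c by auto
    have "(A *\<^sub>v w) $ r = (\<Sum>i<N. \<Sum>l<m. if i = pick J l then A $$ (r, i) * u $ l else 0)"
      unfolding mult_mat_vec_nth_sum[OF A w r] unfolding w_def
      by (auto simp: sum_distrib_left intro!: sum.cong)
    also have "\<dots> = (\<Sum>l<m. \<Sum>i<N. if i = pick J l then A $$ (r, i) * u $ l else 0)"
      by (rule sum.swap)
    also have "\<dots> = (\<Sum>l<m. B $$ (r, l) * u $ l)"
      using pick_J J r A unfolding B_def
      by (auto intro!: sum.cong simp: sum.delta' submatrix_index cols rows pick_UNIV) blast
    also have "\<dots> = c $ r"
      using Bu mult_mat_vec_nth_sum[OF B u r] by simp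
    finally show "(A *\<^sub>v w) $ r = c $ r" .
  qed (use A c in auto)
  moreover have "\<forall>i<N. i \<notin> J \<longrightarrow> w $ i = 0"
    unfolding w_def using pick_J by (auto intro!: sum.neutral)
  ultimately show ?thesis
    using w by blast
qed

lemma exists_kernel_vector_supported_on:
  fixes A :: "'a :: field mat"
  assumes A: "A \<in> carrier_mat m N" and J: "J \<subseteq> {..<N}" "card J = m"
    and inv: "invertible_mat (submatrix A UNIV J)" and k: "k < N" "k \<notin> J"
  shows "\<exists>d \<in> carrier_vec N. A *\<^sub>v d = 0\<^sub>v m \<and> d $ k = 1 \<and> (\<forall>i<N. i \<notin> insert k J \<longrightarrow> d $ i = 0)"
proof -
  obtain w where w: "w \<in> carrier_vec N" "A *\<^sub>v w = col A k" and wJ: "\<forall>i<N. i \<notin> J \<longrightarrow> w $ i = 0"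
    using exists_solution_supported_on[OF A J inv col_carrier_vec[OF k(1) A]] by blast
  have e: "unit_vec N k \<in> carrier_vec N"
    by simp
  have "A *\<^sub>v unit_vec N k = col A k"
  proof (rule eq_vecI)
    fix r assume "r < dim_vec (col A k)"
    then show "(A *\<^sub>v unit_vec N k) $ r = col A k $ r"
      using A k by (simp add: index_mult_mat_vec)
  qed (use A in simp)
  then have "A *\<^sub>v (unit_vec N k - w) = 0\<^sub>v m"
    using A e w col_carrier_vec[OF k(1) A] by (simp add: mult_minus_distrib_mat_vec)
  moreover have "(unit_vec N k - w) $ k = 1" "\<forall>i<N. i \<notin> insert k J \<longrightarrow> (unit_vec N k - w) $ i = 0"
    using w wJ k by simp_all
  ultimately show ?thesis
    using e w by (intro bexI[of _ "unit_vec N k - w"]) auto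
qed

lemma eventually_sum_abs_powr_decreases:
  assumes x: "x \<in> carrier_vec N" and d: "d \<in> carrier_vec N"
    and k: "k < N" "x $ k \<noteq> 0" "d $ k = 1"
    and outside: "\<forall>i<N. i \<noteq> k \<and> d $ i \<noteq> 0 \<longrightarrow> x $ i = 0" and q: "q > 1"
  shows "eventually (\<lambda>s. sum_abs_powr q (x - (s * sgn (x $ k)) \<cdot>\<^sub>v d) < sum_abs_powr q x) (at_right 0)"
proof -
  define a where "a = \<bar>x $ k\<bar>"
  define D where "D = (\<Sum>i\<in>{..<N} - {k}. \<bar>d $ i\<bar> powr q)"
  have a: "a > 0"
    using k unfolding a_def by simp
  have "eventually (\<lambda>s. (a - s) powr q + D * s powr q < a powr q) (at_right 0)"
    using q a unfolding D_def by (intro eventually_powr_diff_add_powr_less) (auto intro: sum_nonneg)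
  moreover have "eventually (\<lambda>s. s < a) (at_right 0)"
    using a eventually_at_right_field by blast
  ultimately show ?thesis
    using eventually_at_right_less[of 0]
  proof eventually_elim
    case (elim s)
    define z where "z = x - (s * sgn (x $ k)) \<cdot>\<^sub>v d"
    have z_nth: "z $ i = x $ i - s * sgn (x $ k) * d $ i" if "i < N" for i
      unfolding z_def using that x d by simp
    have split_k: "sum_abs_powr q v = \<bar>v $ k\<bar> powr q + (\<Sum>i\<in>{..<N} - {k}. \<bar>v $ i\<bar> powr q)"
      if "v \<in> carrier_vec N" for v
      using that k(1) unfolding sum_abs_powr_def by (simp add: sum.remove[of "{..<N}" k])
    have "\<bar>z $ k\<bar> = a - s"
      using z_nth[OF k(1)] k elim unfolding a_def by (cases "x $ k > 0") auto
    moreover have "\<bar>z $ i\<bar> powr q = \<bar>x $ i\<bar> powr q + s powr q * \<bar>d $ i\<bar> powr q"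
      if "i \<in> {..<N} - {k}" for i
      using outside that elim q z_nth[of i] k
      by (cases "d $ i = 0") (auto simp: abs_mult powr_mult)
    ultimately have "sum_abs_powr q z
        = (a - s) powr q + (\<Sum>i\<in>{..<N} - {k}. \<bar>x $ i\<bar> powr q + s powr q * \<bar>d $ i\<bar> powr q)"
      using split_k[of z] x d unfolding z_def by simp
    also have "\<dots> = (a - s) powr q + (\<Sum>i\<in>{..<N} - {k}. \<bar>x $ i\<bar> powr q) + D * s powr q"
      unfolding D_def by (simp add: sum.distrib sum_distrib_left mult.commute)
    also have "\<dots> = sum_abs_powr q x + ((a - s) powr q - a powr q + D * s powr q)"
      using split_k[OF x] unfolding a_def by simp
    finally have "sum_abs_powr q z = sum_abs_powr q x + ((a - s) powr q - a powr q + D * s powr q)" .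
    with elim show ?case
      unfolding z_def by simp
  qed
qed

lemma smult_zero_vec: "c \<cdot>\<^sub>v 0\<^sub>v n = (0\<^sub>v n :: 'a :: mult_zero vec)"
  by (rule eq_vecI) auto

lemma mult_mat_vec_zero: "A \<in> carrier_mat m n \<Longrightarrow> A *\<^sub>v 0\<^sub>v n = 0\<^sub>v m"
  by (intro eq_vecI) (simp_all add: index_mult_mat_vec)

lemma norm2_zero_minus: "y \<in> carrier_vec m \<Longrightarrow> norm2 (0\<^sub>v m - y) = norm2 y"
  unfolding norm2_def by (auto intro!: sum.cong)

lemma sum_abs_powr_smult: "q > 0 \<Longrightarrow> sum_abs_powr q (c \<cdot>\<^sub>v v) = \<bar>c\<bar> powr q * sum_abs_powr q v"
  unfolding sum_abs_powr_def by (simp add: sum_distrib_left abs_mult powr_mult)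

context
  fixes A :: "real mat" and m N :: nat
  assumes A: "A \<in> carrier_mat m N"
    and invertible: "all_square_submatrices_invertible A"
begin

lemma exists_fibre_point_with_smaller_sums:
  assumes x: "x \<in> carrier_vec N" "x \<noteq> 0\<^sub>v N" and sparse: "card (supp x) \<le> N - m"
    and q: "q1 > 1" "q2 > 1"
  shows "\<exists>z \<in> carrier_vec N. A *\<^sub>v z = A *\<^sub>v x
    \<and> sum_abs_powr q1 z < sum_abs_powr q1 x \<and> sum_abs_powr q2 z < sum_abs_powr q2 x"
proof -
  obtain k where k: "k < N" "x $ k \<noteq> 0"
    using x by (auto simp: vec_eq_iff)
  define Z where "Z = {i. i < N \<and> x $ i = 0}"
  have "supp x \<union> Z = {..<N}" "supp x \<inter> Z = {}"
    using x unfolding Z_def supp_def by auto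
  then have "card (supp x) + card Z = N"
    by (metis card_Un_disjoint card_lessThan finite_Un finite_lessThan)
  moreover have "k \<in> supp x"
    using k x unfolding supp_def by simp
  then have "card (supp x) > 0"
    unfolding supp_def card_gt_0_iff by auto
  ultimately have "m \<le> card Z"
    using sparse by linarith
  then obtain J where J: "J \<subseteq> Z" "card J = m"
    by (rule obtain_subset_with_card_n)
  have JN: "J \<subseteq> {..<N}" and kJ: "k \<notin> J"
    using J k unfolding Z_def by auto
  then have "invertible_mat (submatrix A UNIV J)"
    using invertible J A unfolding all_square_submatrices_invertible_def by auto
  then obtain d where d: "d \<in> carrier_vec N" "A *\<^sub>v d = 0\<^sub>v m" "d $ k = 1"
    and d_supp: "\<forall>i<N. i \<notin> insert k J \<longrightarrow> d $ i = 0"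
    using exists_kernel_vector_supported_on[OF A JN J(2) _ k(1) kJ] by blast
  have outside: "\<forall>i<N. i \<noteq> k \<and> d $ i \<noteq> 0 \<longrightarrow> x $ i = 0"
    using d_supp J unfolding Z_def by auto
  have "eventually (\<lambda>s. sum_abs_powr q1 (x - (s * sgn (x $ k)) \<cdot>\<^sub>v d) < sum_abs_powr q1 x
      \<and> sum_abs_powr q2 (x - (s * sgn (x $ k)) \<cdot>\<^sub>v d) < sum_abs_powr q2 x) (at_right 0)"
    using eventually_sum_abs_powr_decreases[OF x(1) d(1) k d(3) outside] q by (intro eventually_conj)
  then obtain s where "sum_abs_powr q1 (x - (s * sgn (x $ k)) \<cdot>\<^sub>v d) < sum_abs_powr q1 x"
    "sum_abs_powr q2 (x - (s * sgn (x $ k)) \<cdot>\<^sub>v d) < sum_abs_powr q2 x"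
    using eventually_happens'[OF trivial_limit_at_right_real] by blast
  moreover have "A *\<^sub>v (x - (s * sgn (x $ k)) \<cdot>\<^sub>v d) = A *\<^sub>v x"
    using A x d by (simp add: mult_minus_distrib_mat_vec mult_mat_vec smult_zero_vec)
  ultimately show ?thesis
    using x d by (intro bexI[of _ "x - (s * sgn (x $ k)) \<cdot>\<^sub>v d"]) auto
qed

lemma card_supp_ge_of_fibre_minimizer:
  fixes f :: "real vec \<Rightarrow> real"
  assumes x: "x \<in> carrier_vec N" "x \<noteq> 0\<^sub>v N" and p: "p > 1"
    and minimal: "\<forall>z \<in> carrier_vec N. A *\<^sub>v z = A *\<^sub>v x \<longrightarrow> f x \<le> f z"
    and strict: "\<forall>z \<in> carrier_vec N. A *\<^sub>v z = A *\<^sub>v x \<longrightarrow> sum_abs_powr p z < sum_abs_powr p x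
      \<longrightarrow> sum_abs_powr 2 z < sum_abs_powr 2 x \<longrightarrow> f z < f x"
  shows "N - m + 1 \<le> card (supp x)"
proof (rule ccontr)
  assume "\<not> N - m + 1 \<le> card (supp x)"
  then obtain z where z: "z \<in> carrier_vec N" "A *\<^sub>v z = A *\<^sub>v x"
    and smaller: "sum_abs_powr p z < sum_abs_powr p x" "sum_abs_powr 2 z < sum_abs_powr 2 x"
    using exists_fibre_point_with_smaller_sums[OF x, of p 2] p by auto
  have "f x \<le> f z"
    using minimal z by blast
  moreover have "f z < f x"
    using strict z smaller by blast
  ultimately show False
    by simp
qed

lemma exists_preimage:
  assumes "m \<le> N" and c: "c \<in> carrier_vec m"
  shows "\<exists>w \<in> carrier_vec N. A *\<^sub>v w = c"
proof -
  have J: "{..<m} \<subseteq> {..<N}" "card {..<m} = m"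
    using \<open>m \<le> N\<close> by auto
  moreover have "dim_col A = N" "dim_row A = m"
    using A by auto
  ultimately have "invertible_mat (submatrix A UNIV {..<m})"
    using invertible unfolding all_square_submatrices_invertible_def by blast
  from exists_solution_supported_on[OF A J this c] show ?thesis
    by blast
qed

lemma penalized_objective_below_zero:
  assumes "m \<le> N" and y: "y \<in> carrier_vec m" "y \<noteq> 0\<^sub>v m" and p: "p > 1" and lam: "lam > 0"
  shows "\<exists>z \<in> carrier_vec N. (1/2) * (norm2 (A *\<^sub>v z - y))\<^sup>2 + lam * pnorm p z powr p
    < (1/2) * (norm2 (A *\<^sub>v 0\<^sub>v N - y))\<^sup>2 + lam * pnorm p (0\<^sub>v N) powr p"
proof -
  obtain w where w: "w \<in> carrier_vec N" "A *\<^sub>v w = y"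
    using exists_preimage[OF assms(1) y(1)] by blast
  define Y where "Y = sum_abs_powr 2 y"
  define W where "W = sum_abs_powr p w"
  have residual: "A *\<^sub>v (t \<cdot>\<^sub>v w) - y = (t - 1) \<cdot>\<^sub>v y" for t
  proof -
    have "A *\<^sub>v (t \<cdot>\<^sub>v w) = t \<cdot>\<^sub>v y"
      using A w by (simp add: mult_mat_vec)
    then show ?thesis
      using y by (intro eq_vecI) (simp_all add: algebra_simps)
  qed
  have objective: "(1/2) * (norm2 (A *\<^sub>v (t \<cdot>\<^sub>v w) - y))\<^sup>2 + lam * pnorm p (t \<cdot>\<^sub>v w) powr p
      = (1/2) * \<bar>t - 1\<bar> powr 2 * Y + lam * \<bar>t\<bar> powr p * W" for t
  proof -
    have "(norm2 (A *\<^sub>v (t \<cdot>\<^sub>v w) - y))\<^sup>2 = \<bar>t - 1\<bar> powr 2 * Y"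
      unfolding residual norm2_power2 Y_def by (rule sum_abs_powr_smult) simp
    moreover have "pnorm p (t \<cdot>\<^sub>v w) powr p = \<bar>t\<bar> powr p * W"
      using p unfolding W_def by (simp add: pnorm_powr_self sum_abs_powr_smult)
    ultimately show ?thesis
      by simp
  qed
  obtain i where "i < m" "y $ i \<noteq> 0"
    using y by (auto simp: vec_eq_iff)
  then have Y: "Y > 0"
    using y unfolding Y_def sum_abs_powr_def by (intro sum_pos2[of _ i]) auto
  have "eventually (\<lambda>t. (1 - t) powr 2 + (2 * lam * W / Y) * t powr p < 1 powr 2) (at_right 0)"
    using p lam Y sum_abs_powr_nonneg[of p w] unfolding W_def
    by (intro eventually_powr_diff_add_powr_less) simp_all
  moreover have "eventually (\<lambda>t. t < 1) (at_right (0::real))"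
    unfolding eventually_at_right_field by (intro exI[of _ 1]) simp
  ultimately have "eventually (\<lambda>t. 0 < t \<and> t < 1 \<and> (1 - t) powr 2 + (2 * lam * W / Y) * t powr p < 1)
      (at_right 0)"
    using eventually_at_right_less[of 0] by eventually_elim simp
  then obtain t where t: "0 < t" "t < 1" "(1 - t) powr 2 + (2 * lam * W / Y) * t powr p < 1"
    using eventually_happens'[OF trivial_limit_at_right_real] by blast
  then have "(1/2) * \<bar>t - 1\<bar> powr 2 * Y + lam * \<bar>t\<bar> powr p * W
      < (1/2) * \<bar>0 - 1\<bar> powr 2 * Y + lam * \<bar>0\<bar> powr p * W"
    using mult_strict_left_mono[OF t(3), of "Y / 2"] Y by (simp add: field_simps abs_minus_commute)
  moreover have "0 \<cdot>\<^sub>v w = 0\<^sub>v N"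
    using w(1) by (intro eq_vecI) simp_all
  ultimately show ?thesis
    using objective[of t] objective[of 0] w(1) by (intro bexI[of _ "t \<cdot>\<^sub>v w"]) simp_all
qed

lemma card_supp_min_pnorm_solution:
  assumes p: "p > 1" and "y \<noteq> 0\<^sub>v m" and x: "x \<in> carrier_vec N" "A *\<^sub>v x = y"
    and minimal: "\<forall>z \<in> carrier_vec N. A *\<^sub>v z = y \<longrightarrow> pnorm p x \<le> pnorm p z"
  shows "N - m + 1 \<le> card (supp x)"
proof (rule card_supp_ge_of_fibre_minimizer[OF x(1) _ p, where f = "pnorm p"])
  show "x \<noteq> 0\<^sub>v N"
    using x \<open>y \<noteq> 0\<^sub>v m\<close> mult_mat_vec_zero[OF A] by auto
qed (use minimal x p in \<open>auto intro: pnorm_less_pnorm\<close>)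

lemma card_supp_min_pnorm_in_residual_ball:
  assumes p: "p > 1" and y: "y \<in> carrier_vec m" and "\<epsilon> < norm2 y"
    and x: "x \<in> carrier_vec N" "norm2 (A *\<^sub>v x - y) \<le> \<epsilon>"
    and minimal: "\<forall>z \<in> carrier_vec N. norm2 (A *\<^sub>v z - y) \<le> \<epsilon> \<longrightarrow> pnorm p x \<le> pnorm p z"
  shows "N - m + 1 \<le> card (supp x)"
proof (rule card_supp_ge_of_fibre_minimizer[OF x(1) _ p, where f = "pnorm p"])
  show "x \<noteq> 0\<^sub>v N"
    using x \<open>\<epsilon> < norm2 y\<close> mult_mat_vec_zero[OF A] norm2_zero_minus[OF y] by auto
qed (use minimal x p in \<open>auto intro: pnorm_less_pnorm\<close>)

lemma card_supp_penalized_minimizer: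
  assumes "m \<le> N" and y: "y \<in> carrier_vec m" "y \<noteq> 0\<^sub>v m" and p: "p > 1" and lam: "lam > 0"
    and x: "x \<in> carrier_vec N"
    and minimal: "\<forall>z \<in> carrier_vec N.
      (1/2) * (norm2 (A *\<^sub>v x - y))\<^sup>2 + lam * (pnorm p x) powr p
      \<le> (1/2) * (norm2 (A *\<^sub>v z - y))\<^sup>2 + lam * (pnorm p z) powr p"
  shows "N - m + 1 \<le> card (supp x)"
proof (rule card_supp_ge_of_fibre_minimizer[OF x _ p])
  show "x \<noteq> 0\<^sub>v N"
    using penalized_objective_below_zero[OF assms(1-5)] minimal by fastforce
qed (use minimal lam p in \<open>auto simp: pnorm_powr_self\<close>)

lemma card_supp_nonzero_elastic_minimizer:
  assumes p: "p > 1" and r: "r > 0" and l1: "l1 > 0" and l2: "l2 \<ge> 0"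
    and x: "x \<in> carrier_vec N" "x \<noteq> 0\<^sub>v N"
    and minimal: "\<forall>z \<in> carrier_vec N.
      (1/2) * (norm2 (A *\<^sub>v x - y))\<^sup>2 + l1 * (pnorm p x) powr r + l2 * (norm2 x)\<^sup>2
      \<le> (1/2) * (norm2 (A *\<^sub>v z - y))\<^sup>2 + l1 * (pnorm p z) powr r + l2 * (norm2 z)\<^sup>2"
  shows "N - m + 1 \<le> card (supp x)"
proof -
  have "l1 * pnorm p z powr r + l2 * (norm2 z)\<^sup>2 < l1 * pnorm p x powr r + l2 * (norm2 x)\<^sup>2"
    if "sum_abs_powr p z < sum_abs_powr p x" "sum_abs_powr 2 z < sum_abs_powr 2 x" for z
  proof -
    have "pnorm p z powr r < pnorm p x powr r"
      using pnorm_less_pnorm[OF _ that(1)] pnorm_nonneg p r by (intro powr_less_mono2) auto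
    with that(2) l1 l2 show ?thesis
      unfolding norm2_power2 by (intro add_less_le_mono mult_left_mono) simp_all
  qed
  then show ?thesis
    using minimal by (intro card_supp_ge_of_fibre_minimizer[OF x p, of "\<lambda>z. (1/2) * (norm2 (A *\<^sub>v z - y))\<^sup>2
      + l1 * (pnorm p z) powr r + l2 * (norm2 z)\<^sup>2"]) auto
qed

end

theorem proposition3p1:
  fixes p :: real and m N :: nat and A :: "real mat" and y :: "real vec"
  assumes "p > 1" and "N \<ge> m"
    and "A \<in> carrier_mat m N" and "y \<in> carrier_vec m"
    and "all_square_submatrices_invertible A" and "y \<noteq> 0\<^sub>v m"
  shows
    "(\<forall>x \<in> carrier_vec N.
        (A *\<^sub>v x = y \<and> (\<forall>z \<in> carrier_vec N. A *\<^sub>v z = y \<longrightarrow> pnorm p x \<le> pnorm p z))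
        \<longrightarrow> card (supp x) \<ge> N - m + 1)
   \<and> (\<forall>\<epsilon>::real. 0 < \<epsilon> \<and> \<epsilon> < norm2 y \<longrightarrow>
       (\<forall>x \<in> carrier_vec N.
          (norm2 (A *\<^sub>v x - y) \<le> \<epsilon> \<and>
           (\<forall>z \<in> carrier_vec N. norm2 (A *\<^sub>v z - y) \<le> \<epsilon> \<longrightarrow> pnorm p x \<le> pnorm p z))
          \<longrightarrow> card (supp x) \<ge> N - m + 1))
   \<and> (\<forall>lam::real. 0 < lam \<longrightarrow>
       (\<forall>x \<in> carrier_vec N.
          (\<forall>z \<in> carrier_vec N.
              (1/2) * (norm2 (A *\<^sub>v x - y))\<^sup>2 + lam * (pnorm p x) powr p
            \<le> (1/2) * (norm2 (A *\<^sub>v z - y))\<^sup>2 + lam * (pnorm p z) powr p)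
          \<longrightarrow> card (supp x) \<ge> N - m + 1))
   \<and> (\<forall>r l1 l2 :: real. 0 < r \<and> 0 < l1 \<and> 0 \<le> l2 \<longrightarrow>
       (\<forall>x \<in> carrier_vec N. x \<noteq> 0\<^sub>v N \<and>
          (\<forall>z \<in> carrier_vec N.
              (1/2) * (norm2 (A *\<^sub>v x - y))\<^sup>2 + l1 * (pnorm p x) powr r + l2 * (norm2 x)\<^sup>2
            \<le> (1/2) * (norm2 (A *\<^sub>v z - y))\<^sup>2 + l1 * (pnorm p z) powr r + l2 * (norm2 z)\<^sup>2)
          \<longrightarrow> card (supp x) \<ge> N - m + 1))"
  using card_supp_min_pnorm_solution[OF assms(3,5,1,6)]
    card_supp_min_pnorm_in_residual_ball[OF assms(3,5,1,4)]
    card_supp_penalized_minimizer[OF assms(3,5,2,4,6,1)]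
    card_supp_nonzero_elastic_minimizer[OF assms(3,5,1)]
  by blast

end
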